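(* Let $\Omega_1,\dots,\Omega_n$ be formal 1-forms such that $(\nu_\Gamma(\Omega_1),\dots,\nu_\Gamma(\Omega_n))$ is the $\mathbb C[[x]]$-basis of values of $\Gamma$ (i.e. the minimal generating set of $\Lambda_\Gamma$ as a $\mathbb C[[x]]$-collection; it has exactly one element in each residue class modulo $n$, namely the minimum of $\Lambda_\Gamma$ in that class). Then $$\hat\Omega^1(\mathbb C^2,0)=\mathbb C[[x]]\,\Omega_1\oplus\cdots\oplus\mathbb C[[x]]\,\Omega_n\oplus\mathcal I_\Gamma .$$
   Context: $\Gamma$ is a singular irreducible germ of holomorphic curve at $0\in\mathbb C^2$ with Puiseux parametrization $\Gamma(t)=(t^n,\sum_{\beta\ge\beta_1}a_{\beta,\Gamma}t^\beta)$, $n\ge2$. $\hat\Omega^1(\mathbb C^2,0)$ denotes the formal 1-forms $a\,dx+b\,dy$, $a,b\in\mathbb C[[x,y]]$, a $\mathbb C[[x]]$-module. For such $\omega$ with $\Gamma^*\omega=h(t)dt$, $\nu_\Gamma(\omega)=\mathrm{ord}_th+1$ ($\infty$ if $h\equiv0$). $\Lambda_\Gamma=\{\nu_\Gamma(\omega)\}\setminus\{\infty\}$ over holomorphic 1-forms $\omega$. A $\mathbb C[[x]]$-collection is $S\subset\mathbb Z_{>0}$ with $S+n\mathbb Z_{\ge0}\subset S$. $\mathcal I_\Gamma=\{\omega\in\hat\Omega^1(\mathbb C^2,0):\Gamma^*\omega\equiv0\}$. *)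

theory Defs
  imports "HOL-Computational_Algebra.Formal_Power_Series" "HOL-Library.Extended_Nat"
begin

text \<open>A formal power series in x,y is represented as an element of
  complex fps fps: a power series in y whose coefficients are power series in x,
  i.e. the coefficient of x^i y^j of F is (F $ j) $ i.
  A formal 1-form a dx + b dy is the pair (a, b).\<close>

type_synonym bseries = "complex fps fps"
type_synonym form1 = "bseries \<times> bseries"

text \<open>The curve Gamma(t) = (t^n, y(t)). Substitution F(t^n, y(t)) (y has zero
  constant term, so each coefficient is a finite sum).\<close>
definition subst_curve :: "nat \<Rightarrow> complex fps \<Rightarrow> bseries \<Rightarrow> complex fps" where
  "subst_curve n y F =
     Abs_fps (\<lambda>k. fps_nth (\<Sum>j\<le>k. fps_compose (fps_nth F j) (fps_X ^ n) * y ^ j) k)"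

definition pullback :: "nat \<Rightarrow> complex fps \<Rightarrow> form1 \<Rightarrow> complex fps" where
  "pullback n y \<omega> =
     subst_curve n y (fst \<omega>) * fps_deriv (fps_X ^ n) + subst_curve n y (snd \<omega>) * fps_deriv y"

definition nu :: "nat \<Rightarrow> complex fps \<Rightarrow> form1 \<Rightarrow> enat" where
  "nu n y \<omega> = (if pullback n y \<omega> = 0 then \<infinity> else enat (subdegree (pullback n y \<omega>) + 1))"

definition holo_series :: "bseries \<Rightarrow> bool" where
  "holo_series F \<longleftrightarrow> (\<exists>C R. \<forall>i j. norm (fps_nth (fps_nth F j) i) \<le> C * R ^ (i + j))"

definition holo_form :: "form1 \<Rightarrow> bool" where
  "holo_form \<omega> \<longleftrightarrow> holo_series (fst \<omega>) \<and> holo_series (snd \<omega>)"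

definition values_set :: "nat \<Rightarrow> complex fps \<Rightarrow> nat set" where
  "values_set n y = {v. \<exists>\<omega>. holo_form \<omega> \<and> nu n y \<omega> = enat v}"

definition values_basis :: "nat \<Rightarrow> complex fps \<Rightarrow> nat set" where
  "values_basis n y = {v \<in> values_set n y.
      \<forall>w \<in> values_set n y. w mod n = v mod n \<longrightarrow> v \<le> w}"

definition ideal_curve :: "nat \<Rightarrow> complex fps \<Rightarrow> form1 set" where
  "ideal_curve n y = {\<omega>. pullback n y \<omega> = 0}"

text \<open>Puiseux parametrization (t^n, sum_{beta >= beta1} a_beta t^beta) of a singular
  irreducible germ: convergent, n >= 2, first exponent beta1 > n not divisible by n,
  and the parametrization is primitive (irreducibility).\<close>
definition puiseux_param :: "nat \<Rightarrow> complex fps \<Rightarrow> bool" where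
  "puiseux_param n y \<longleftrightarrow>
     2 \<le> n \<and>
     (\<exists>C R. \<forall>k. norm (fps_nth y k) \<le> C * R ^ k) \<and>
     (\<exists>\<beta>1. n < \<beta>1 \<and> \<not> n dvd \<beta>1 \<and> fps_nth y \<beta>1 \<noteq> 0 \<and> (\<forall>\<beta><\<beta>1. fps_nth y \<beta> = 0)) \<and>
     (\<forall>d. 1 < d \<longrightarrow> d dvd n \<longrightarrow> (\<exists>k. fps_nth y k \<noteq> 0 \<and> \<not> d dvd k))"

definition form_add :: "form1 \<Rightarrow> form1 \<Rightarrow> form1" where
  "form_add \<omega> \<eta> = (fst \<omega> + fst \<eta>, snd \<omega> + snd \<eta>)"

definition lin_comb :: "nat \<Rightarrow> (nat \<Rightarrow> complex fps) \<Rightarrow> (nat \<Rightarrow> form1) \<Rightarrow> form1" where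
  "lin_comb n f \<Omega> = ((\<Sum>i<n. fps_const (f i) * fst (\<Omega> i)), (\<Sum>i<n. fps_const (f i) * snd (\<Omega> i)))"

end

theory Submission
  imports Defs
begin

text \<open>The pullback is \<open>\<complex>[[x]]\<close>-linear with \<open>x\<close> acting on \<open>\<complex>[[t]]\<close> as \<open>t\<^sup>n\<close>, so the theorem
  is a statement about the combinations \<open>\<Sum> f\<^sub>i(t\<^sup>n) h\<^sub>i\<close> of the series \<open>h\<^sub>i = \<Gamma>\<^sup>*\<Omega>\<^sub>i\<close>.
  The term \<open>f\<^sub>i(t\<^sup>n) h\<^sub>i\<close> has order \<open>n ord f\<^sub>i + ord h\<^sub>i\<close>, and the orders of the
  \<open>h\<^sub>i\<close> are pairwise incongruent mod \<open>n\<close>; hence nonzero terms never cancel, which gives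
  independence. For spanning, the order of every nonzero pullback is a value (truncating a formal
  form to a polynomial one does not change the low coefficients of its pullback), so it exceeds
  the minimal value \<open>ord h\<^sub>i + 1\<close> of its residue class by a multiple \<open>n k\<close>; the coefficient
  of \<open>x\<^sup>k\<close> in \<open>f\<^sub>i\<close> is then chosen to kill the lowest coefficient of the remainder, order by
  order.\<close>

unbundle fps_syntax

lemma fps_compose_X_power_nth:
  fixes a :: "'a::comm_ring_1 fps"
  assumes "0 < n"
  shows "(a oo fps_X ^ n) $ k = (if n dvd k then a $ (k div n) else 0)"
proof -
  have "(a oo fps_X ^ n) $ k = (\<Sum>i\<in>{0..k}. if i = k div n \<and> n dvd k then a $ i else 0)"
    unfolding fps_compose_nth
    by (rule sum.cong) (use assms in \<open>auto simp: power_mult[symmetric] fps_X_power_nth\<close>)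
  also have "\<dots> = (if n dvd k then a $ (k div n) else 0)"
    using assms by (auto simp: sum.delta' div_le_dividend)
  finally show ?thesis .
qed

lemma fps_power_nth_below:
  fixes y :: "'a::idom fps"
  assumes "y $ 0 = 0" "i < j"
  shows "(y ^ j) $ i = 0"
proof (cases "y = 0")
  case False
  then have "1 \<le> subdegree y" using assms(1) subdegree_eq_0_iff by fastforce
  then show ?thesis using assms(2) by (intro fps_pow_nth_below_subdegree) (simp add: less_le_trans)
qed (use assms in \<open>simp add: zero_power\<close>)

lemma fps_mult_nth_add_subdegree:
  fixes f g :: "'a::{comm_monoid_add,mult_zero} fps"
  assumes "\<And>i. i < a \<Longrightarrow> f $ i = 0"
  shows "(f * g) $ (a + subdegree g) = f $ a * g $ subdegree g"
proof -
  have "(f * g) $ (a + subdegree g) = (\<Sum>i=0..a + subdegree g. if i = a then f $ a * g $ subdegree g else 0)"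
    unfolding fps_mult_nth
  proof (rule sum.cong[OF refl])
    fix i assume "i \<in> {0..a + subdegree g}"
    then consider "i < a" | "i = a" | "a < i" "a + subdegree g - i < subdegree g" by fastforce
    then show "f $ i * g $ (a + subdegree g - i) = (if i = a then f $ a * g $ subdegree g else 0)"
      by cases (auto simp: assms)
  qed
  then show ?thesis by simp
qed

lemma fps_compose_X_power_mult_nth_lowest:
  fixes A h :: "'a::comm_ring_1 fps"
  assumes "0 < n" "\<And>k. k < k0 \<Longrightarrow> A $ k = 0"
  shows "((A oo fps_X ^ n) * h) $ (n * k0 + subdegree h) = A $ k0 * h $ subdegree h"
proof -
  have "(A oo fps_X ^ n) $ i = 0" if "i < n * k0" for i
    using that assms by (auto simp: fps_compose_X_power_nth)
  then have "((A oo fps_X ^ n) * h) $ (n * k0 + subdegree h) = (A oo fps_X ^ n) $ (n * k0) * h $ subdegree h"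
    by (rule fps_mult_nth_add_subdegree)
  then show ?thesis
    using assms(1) by (simp add: fps_compose_X_power_nth)
qed

lemma fps_compose_X_power_mult_nth_eq_0:
  fixes A h :: "'a::idom fps"
  assumes "0 < n" "\<And>k. A $ k \<noteq> 0 \<Longrightarrow> d < n * k + subdegree h"
  shows "((A oo fps_X ^ n) * h) $ d = 0"
proof (cases "A = 0")
  case False
  have "subdegree (A oo fps_X ^ n) = n * subdegree A"
    using assms(1) by (simp add: fps_X_power_subdegree mult.commute)
  then show ?thesis
    using assms(2)[of "subdegree A"] False by (intro fps_mult_nth_eq0) simp
qed simp

lemma subdegree_compose_X_power_mult:
  fixes A h :: "'a::idom fps"
  assumes "0 < n" "A \<noteq> 0" "h \<noteq> 0"
  shows "subdegree ((A oo fps_X ^ n) * h) = n * subdegree A + subdegree h"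
  using assms by (simp add: fps_compose_eq_0_iff fps_X_power_subdegree mult.commute)

lemma sum_fps_neq_0_if_subdegrees_inj:
  fixes T :: "'i \<Rightarrow> 'a::comm_monoid_add fps"
  assumes "finite I" "I \<noteq> {}" "\<And>i. i \<in> I \<Longrightarrow> T i \<noteq> 0" "inj_on (\<lambda>i. subdegree (T i)) I"
  shows "sum T I \<noteq> 0"
proof -
  obtain i0 where i0: "i0 \<in> I" and min: "\<And>j. j \<in> I \<Longrightarrow> subdegree (T i0) \<le> subdegree (T j)"
    using ex_min_if_finite[of "(\<lambda>i. subdegree (T i)) ` I"] assms(1,2) by fastforce
  have "T j $ subdegree (T i0) = 0" if "j \<in> I - {i0}" for j
    using that min[of j] inj_onD[OF assms(4), of i0 j] i0 by (intro nth_less_subdegree_zero) fastforce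
  then have "sum T I $ subdegree (T i0) = T i0 $ subdegree (T i0)"
    using i0 assms(1) by (simp add: fps_sum_nth sum.remove)
  then show ?thesis using assms(3)[OF i0] by auto
qed

locale incongruent_orders =
  fixes n :: nat and h :: "nat \<Rightarrow> complex fps"
  assumes n_pos: "0 < n"
    and h_nonzero: "i < n \<Longrightarrow> h i \<noteq> 0"
    and subdegree_mod_inj:
      "i < n \<Longrightarrow> j < n \<Longrightarrow> subdegree (h i) mod n = subdegree (h j) mod n \<Longrightarrow> i = j"
begin

definition comb :: "(nat \<Rightarrow> complex fps) \<Rightarrow> complex fps" where
  "comb f = (\<Sum>i<n. (f i oo fps_X ^ n) * h i)"

lemma comb_diff: "comb f - comb g = comb (\<lambda>i. f i - g i)"
  by (simp add: comb_def sum_subtractf fps_compose_sub_distrib left_diff_distrib)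

lemma shifted_orders_eq_imp_eq:
  assumes "i < n" "j < n" "n * k + subdegree (h i) = n * l + subdegree (h j)"
  shows "i = j"
proof -
  have "(n * k + subdegree (h i)) mod n = (n * l + subdegree (h j)) mod n"
    using assms(3) by simp
  then show ?thesis using subdegree_mod_inj[OF assms(1,2)] by simp
qed

lemma comb_eq_0_imp_zero:
  assumes "comb f = 0" "i < n"
  shows "f i = 0"
proof (rule ccontr)
  assume "f i \<noteq> 0"
  define I where "I = {j. j < n \<and> f j \<noteq> 0}"
  define T where "T j = (f j oo fps_X ^ n) * h j" for j
  have sub: "subdegree (T j) = n * subdegree (f j) + subdegree (h j)" if "j \<in> I" for j
    using that n_pos h_nonzero by (simp add: I_def T_def subdegree_compose_X_power_mult)
  have "sum T I \<noteq> 0"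
  proof (rule sum_fps_neq_0_if_subdegrees_inj)
    show "I \<noteq> {}" using \<open>f i \<noteq> 0\<close> assms(2) by (auto simp: I_def)
    show "T j \<noteq> 0" if "j \<in> I" for j
      using that n_pos h_nonzero by (simp add: I_def T_def fps_compose_eq_0_iff)
    show "inj_on (\<lambda>j. subdegree (T j)) I"
      by (rule inj_onI) (auto simp: sub I_def dest: shifted_orders_eq_imp_eq)
  qed (simp add: I_def)
  moreover have "sum T I = comb f"
    unfolding comb_def T_def I_def by (rule sum.mono_neutral_left) auto
  ultimately show False using assms(1) by simp
qed

text \<open>\<open>G d\<close> is placed at \<open>x\<^sup>k\<close> in the \<open>i\<close>-th component whenever \<open>d = n k + ord h\<^sub>i\<close>,
  so it alone determines the order-\<open>d\<close> coefficient of the combination modulo lower terms.\<close>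

definition coeffs_along_orders :: "(nat \<Rightarrow> complex) \<Rightarrow> nat \<Rightarrow> complex fps" where
  "coeffs_along_orders G i = Abs_fps (\<lambda>k. G (n * k + subdegree (h i)))"

lemma comb_nth_split_at_order:
  assumes "i0 < n" "d = n * k0 + subdegree (h i0)"
  shows "comb (coeffs_along_orders G) $ d =
           comb (coeffs_along_orders (\<lambda>w. if w < d then G w else 0)) $ d + G d * h i0 $ subdegree (h i0)"
proof -
  define D where "D i = coeffs_along_orders G i - coeffs_along_orders (\<lambda>w. if w < d then G w else 0) i" for i
  have D_nth: "D i $ k = (if n * k + subdegree (h i) < d then 0 else G (n * k + subdegree (h i)))" for i k
    by (simp add: D_def coeffs_along_orders_def)
  have "((D j oo fps_X ^ n) * h j) $ d = (if j = i0 then G d * h i0 $ subdegree (h i0) else 0)"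
    if "j < n" for j
  proof (cases "j = i0")
    case True
    have "D i0 $ k = 0" if "k < k0" for k
      using that assms(2) n_pos by (simp add: D_nth)
    then show ?thesis
      using fps_compose_X_power_mult_nth_lowest[OF n_pos, of k0 "D i0" "h i0"] True assms(2)
      by (simp add: D_nth)
  next
    case False
    have "d < n * k + subdegree (h j)" if "D j $ k \<noteq> 0" for k
    proof -
      have "d \<le> n * k + subdegree (h j)" using that by (simp add: D_nth split: if_splits)
      moreover have "d \<noteq> n * k + subdegree (h j)"
        using shifted_orders_eq_imp_eq[OF assms(1) \<open>j < n\<close>] False assms(2) by metis
      ultimately show ?thesis by simp
    qed
    then show ?thesis using False n_pos by (simp add: fps_compose_X_power_mult_nth_eq_0)
  qed
  then have "comb D $ d = G d * h i0 $ subdegree (h i0)"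
    using assms(1) by (simp add: comb_def fps_sum_nth)
  moreover have "comb (coeffs_along_orders G) - comb (coeffs_along_orders (\<lambda>w. if w < d then G w else 0)) = comb D"
    unfolding D_def by (rule comb_diff)
  ultimately show ?thesis by (metis add.commute eq_diff_eq fps_sub_nth)
qed

lemma comb_surj:
  assumes slots: "\<And>g. P \<noteq> comb g \<Longrightarrow> \<exists>i<n. \<exists>k. subdegree (P - comb g) = n * k + subdegree (h i)"
  shows "\<exists>f. P = comb f"
proof -
  define below where "below G d = (\<lambda>w. if w < d then G w else 0)" for G :: "nat \<Rightarrow> complex" and d
  define slot where "slot d i \<longleftrightarrow> i < n \<and> (\<exists>k. d = n * k + subdegree (h i))" for d i
  define step where "step G d =
     (if \<exists>i. slot d i
      then (P - comb (coeffs_along_orders (below G d))) $ d / h (SOME i. slot d i) $ subdegree (h (SOME i. slot d i))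
      else 0)" for G d
  \<comment> \<open>\<open>G d\<close> is chosen from \<open>G\<close> below \<open>d\<close> to cancel the order-\<open>d\<close> coefficient of the remainder.\<close>
  define G where "G = wfrec less_than step"
  have G_rec: "G d = step G d" for d
  proof -
    have "G d = step (cut G less_than d) d"
      using wfrec[OF wf_less_than, of step d] by (simp add: G_def)
    moreover have "below (cut G less_than d) d = below G d" by (auto simp: below_def cut_apply)
    ultimately show ?thesis by (simp add: step_def)
  qed
  have "P = comb (coeffs_along_orders G)"
  proof (rule ccontr)
    assume ne: "P \<noteq> comb (coeffs_along_orders G)"
    define d where "d = subdegree (P - comb (coeffs_along_orders G))"
    obtain i0 k0 where i0: "i0 < n" and d: "d = n * k0 + subdegree (h i0)"
      using slots[OF ne] d_def by blast
    have "slot d i0" using i0 d by (auto simp: slot_def)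
    moreover have "i = i0" if "slot d i" for i
      using that shifted_orders_eq_imp_eq[OF _ i0] d by (metis slot_def)
    ultimately have "(SOME i. slot d i) = i0" by (rule some_equality)
    then have "G d * h i0 $ subdegree (h i0) = (P - comb (coeffs_along_orders (below G d))) $ d"
      using G_rec[of d] \<open>slot d i0\<close> h_nonzero[OF i0] by (auto simp: step_def)
    then have "(P - comb (coeffs_along_orders G)) $ d = 0"
      using comb_nth_split_at_order[OF i0 d, of G] by (simp add: below_def)
    then show False using ne unfolding d_def by (metis nth_subdegree_zero_iff right_minus_eq)
  qed
  then show ?thesis by blast
qed

end

lemma subst_curve_nth_partial_sum:
  assumes "y $ 0 = 0" "k \<le> N"
  shows "subst_curve n y F $ k = (\<Sum>j\<le>N. (F $ j oo fps_X ^ n) * y ^ j) $ k"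
proof -
  have "(\<Sum>j\<le>N. ((F $ j oo fps_X ^ n) * y ^ j) $ k) = (\<Sum>j\<le>k. ((F $ j oo fps_X ^ n) * y ^ j) $ k)"
    by (rule sum.mono_neutral_right)
       (use assms in \<open>auto simp: fps_mult_nth fps_power_nth_below intro!: sum.neutral\<close>)
  then show ?thesis by (simp add: subst_curve_def fps_sum_nth)
qed

lemma subst_curve_add: "subst_curve n y (F + G) = subst_curve n y F + subst_curve n y G"
  by (rule fps_ext) (simp add: subst_curve_def fps_compose_add_distrib distrib_right sum.distrib)

lemma subst_curve_sum:
  "finite I \<Longrightarrow> subst_curve n y (\<Sum>i\<in>I. F i) = (\<Sum>i\<in>I. subst_curve n y (F i))"
proof (induction I rule: finite_induct)
  case empty
  then show ?case by (simp add: fps_ext subst_curve_def fps_sum_nth)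
qed (simp add: subst_curve_add)

lemma subst_curve_const_mult:
  assumes "0 < n" "y $ 0 = 0"
  shows "subst_curve n y (fps_const g * F) = (g oo fps_X ^ n) * subst_curve n y F"
proof (rule fps_ext)
  fix k
  have X0: "(fps_X ^ n :: complex fps) $ 0 = 0" using assms by simp
  have "subst_curve n y (fps_const g * F) $ k = ((g oo fps_X ^ n) * (\<Sum>j\<le>k. (F $ j oo fps_X ^ n) * y ^ j)) $ k"
    by (simp add: subst_curve_def fps_compose_mult_distrib[OF X0] mult.assoc sum_distrib_left)
  also have "\<dots> = ((g oo fps_X ^ n) * subst_curve n y F) $ k"
    unfolding fps_mult_nth
    by (rule sum.cong[OF refl]) (simp add: subst_curve_nth_partial_sum[OF assms(2), where N=k])
  finally show "subst_curve n y (fps_const g * F) $ k = ((g oo fps_X ^ n) * subst_curve n y F) $ k" .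
qed

lemma pullback_form_add: "pullback n y (form_add \<omega> \<eta>) = pullback n y \<omega> + pullback n y \<eta>"
  by (simp add: pullback_def form_add_def subst_curve_add algebra_simps)

lemma pullback_lin_comb:
  assumes "0 < n" "y $ 0 = 0"
  shows "pullback n y (lin_comb m f \<Omega>) = (\<Sum>i<m. (f i oo fps_X ^ n) * pullback n y (\<Omega> i))"
  by (simp add: pullback_def lin_comb_def subst_curve_sum subst_curve_const_mult[OF assms]
        sum_distrib_right distrib_left sum.distrib mult.assoc)

definition bseries_cutoff :: "nat \<Rightarrow> bseries \<Rightarrow> bseries" where
  "bseries_cutoff N F = fps_cutoff N (Abs_fps (\<lambda>j. fps_cutoff N (F $ j)))"

lemma holo_series_bseries_cutoff: "holo_series (bseries_cutoff N F)"
proof -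
  define C where "C = (\<Sum>j<N. \<Sum>i<N. norm (F $ j $ i))"
  have "norm (bseries_cutoff N F $ j $ i) \<le> C * 1 ^ (i + j)" for i j
  proof (cases "i < N \<and> j < N")
    case True
    have "norm (F $ j $ i) \<le> (\<Sum>i<N. norm (F $ j $ i))"
      using True by (intro member_le_sum) auto
    also have "\<dots> \<le> C"
      unfolding C_def using True by (intro member_le_sum[of j]) (auto intro: sum_nonneg)
    finally show ?thesis using True by (simp add: bseries_cutoff_def)
  next
    case False
    have "0 \<le> C" unfolding C_def by (intro sum_nonneg) auto
    then show ?thesis using False by (auto simp: bseries_cutoff_def)
  qed
  then show ?thesis unfolding holo_series_def by blast
qed

lemma subst_curve_bseries_cutoff_nth:
  assumes "0 < n" "k < N"
  shows "subst_curve n y (bseries_cutoff N F) $ k = subst_curve n y F $ k"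
proof -
  have "((bseries_cutoff N F $ j oo fps_X ^ n) * y ^ j) $ k = ((F $ j oo fps_X ^ n) * y ^ j) $ k"
    if "j \<le> k" for j
  proof -
    have "fps_cutoff N (bseries_cutoff N F $ j oo fps_X ^ n) = fps_cutoff N (F $ j oo fps_X ^ n)"
      using assms that by (auto simp: fps_cutoff_eq_fps_cutoff_iff bseries_cutoff_def
          fps_compose_X_power_nth intro: le_less_trans[OF div_le_dividend])
    then show ?thesis by (metis assms(2) fps_cutoff_left_mult_nth)
  qed
  then show ?thesis by (simp add: subst_curve_def fps_sum_nth)
qed

lemma pullback_bseries_cutoff_nth:
  assumes "0 < n" "k < N"
  shows "pullback n y (bseries_cutoff N (fst \<omega>), bseries_cutoff N (snd \<omega>)) $ k = pullback n y \<omega> $ k"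
proof -
  have "fps_cutoff N (subst_curve n y (bseries_cutoff N F)) = fps_cutoff N (subst_curve n y F)" for F
    using assms by (simp add: fps_cutoff_eq_fps_cutoff_iff subst_curve_bseries_cutoff_nth)
  then show ?thesis
    unfolding pullback_def fps_add_nth by (metis assms(2) fps_cutoff_left_mult_nth fst_conv snd_conv)
qed

lemma pullback_order_in_values_set:
  assumes "0 < n" "pullback n y \<omega> \<noteq> 0"
  shows "subdegree (pullback n y \<omega>) + 1 \<in> values_set n y"
proof -
  define d where "d = subdegree (pullback n y \<omega>)"
  define \<omega>' where "\<omega>' = (bseries_cutoff (Suc d) (fst \<omega>), bseries_cutoff (Suc d) (snd \<omega>))"
  have agree: "pullback n y \<omega>' $ k = pullback n y \<omega> $ k" if "k \<le> d" for k
    unfolding \<omega>'_def using that assms(1) by (simp add: pullback_bseries_cutoff_nth)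
  have "subdegree (pullback n y \<omega>') = d"
    by (rule subdegreeI) (use agree assms(2) d_def in auto)
  moreover have "pullback n y \<omega>' \<noteq> 0"
    using agree[of d] assms(2) d_def by auto
  ultimately have "nu n y \<omega>' = enat (d + 1)" by (simp add: nu_def)
  moreover have "holo_form \<omega>'" by (simp add: holo_form_def \<omega>'_def holo_series_bseries_cutoff)
  ultimately show ?thesis unfolding values_set_def d_def by blast
qed

lemma values_basis_below:
  assumes "v \<in> values_set n y"
  obtains m where "m \<in> values_basis n y" "m \<le> v" "m mod n = v mod n"
proof -
  define m where "m = (LEAST w. w \<in> values_set n y \<and> w mod n = v mod n)"
  have m: "m \<in> values_set n y \<and> m mod n = v mod n"
    unfolding m_def by (rule LeastI[of _ v]) (use assms in auto)
  have "m \<in> values_basis n y"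
    using m unfolding values_basis_def m_def by (auto intro: Least_le)
  moreover have "m \<le> v" using assms unfolding m_def by (auto intro: Least_le)
  ultimately show thesis using m that by blast
qed

definition form_diff :: "form1 \<Rightarrow> form1 \<Rightarrow> form1" where
  "form_diff \<omega> \<eta> = (fst \<omega> - fst \<eta>, snd \<omega> - snd \<eta>)"

lemma form_add_form_diff: "form_add \<eta> (form_diff \<omega> \<eta>) = \<omega>"
  by (simp add: form_add_def form_diff_def)

lemma pullback_form_diff: "pullback n y (form_diff \<omega> \<eta>) = pullback n y \<omega> - pullback n y \<eta>"
  using pullback_form_add[of n y \<eta> "form_diff \<omega> \<eta>"] by (simp add: form_add_form_diff)

lemma values_basis_enumerated:
  assumes "bij_betw (\<lambda>i. nu n y (\<Omega> i)) {..<n} (enat ` values_basis n y)" "i < n"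
  shows "pullback n y (\<Omega> i) \<noteq> 0" "subdegree (pullback n y (\<Omega> i)) + 1 \<in> values_basis n y"
proof -
  have "nu n y (\<Omega> i) \<in> enat ` values_basis n y"
    using bij_betw_apply[OF assms(1)] assms(2) by simp
  then obtain m where "nu n y (\<Omega> i) = enat m" "m \<in> values_basis n y" by blast
  then show "pullback n y (\<Omega> i) \<noteq> 0" "subdegree (pullback n y (\<Omega> i)) + 1 \<in> values_basis n y"
    by (auto simp: nu_def split: if_splits)
qed

lemma incongruent_orders_of_values_basis:
  assumes "0 < n" and bij: "bij_betw (\<lambda>i. nu n y (\<Omega> i)) {..<n} (enat ` values_basis n y)"
  shows "incongruent_orders n (\<lambda>i. pullback n y (\<Omega> i))"
proof
  show "0 < n" by (fact assms(1))
  show "pullback n y (\<Omega> i) \<noteq> 0" if "i < n" for i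
    using values_basis_enumerated[OF bij that] by simp
  fix i j
  assume ij: "i < n" "j < n"
    and "subdegree (pullback n y (\<Omega> i)) mod n = subdegree (pullback n y (\<Omega> j)) mod n"
  then have "(subdegree (pullback n y (\<Omega> i)) + 1) mod n = (subdegree (pullback n y (\<Omega> j)) + 1) mod n"
    by (metis mod_add_left_eq)
  then have "subdegree (pullback n y (\<Omega> i)) + 1 = subdegree (pullback n y (\<Omega> j)) + 1"
    using values_basis_enumerated(2)[OF bij ij(1)] values_basis_enumerated(2)[OF bij ij(2)]
    unfolding values_basis_def by (auto intro: order.antisym)
  then have "nu n y (\<Omega> i) = nu n y (\<Omega> j)"
    using values_basis_enumerated(1)[OF bij] ij by (simp add: nu_def)
  then show "i = j" using bij_betw_imp_inj_on[OF bij] ij by (auto dest: inj_onD)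
qed

lemma pullback_order_in_basis_class:
  assumes "0 < n" and bij: "bij_betw (\<lambda>i. nu n y (\<Omega> i)) {..<n} (enat ` values_basis n y)"
    and "pullback n y \<omega> \<noteq> 0"
  shows "\<exists>i<n. \<exists>k. subdegree (pullback n y \<omega>) = n * k + subdegree (pullback n y (\<Omega> i))"
proof -
  define v where "v = subdegree (pullback n y \<omega>) + 1"
  obtain m where m: "m \<in> values_basis n y" "m \<le> v" "m mod n = v mod n"
    using values_basis_below pullback_order_in_values_set[OF assms(1,3)] v_def by metis
  have "enat m \<in> (\<lambda>i. nu n y (\<Omega> i)) ` {..<n}"
    using bij_betw_imp_surj_on[OF bij] m(1) by auto
  then obtain i where i: "i < n" "nu n y (\<Omega> i) = enat m" by auto
  then have "m = subdegree (pullback n y (\<Omega> i)) + 1" by (auto simp: nu_def split: if_splits)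
  moreover have "n dvd v - m"
    using mod_eq_dvd_iff_nat[OF m(2)] m(3) by (simp add: eq_commute)
  then obtain k where "v - m = n * k" ..
  ultimately have "subdegree (pullback n y \<omega>) = n * k + subdegree (pullback n y (\<Omega> i))"
    using m(2) v_def by simp
  then show ?thesis using i(1) by blast
qed

lemma lin_comb_values_basis_independent:
  assumes "0 < n" "y $ 0 = 0" "bij_betw (\<lambda>i. nu n y (\<Omega> i)) {..<n} (enat ` values_basis n y)"
    and "lin_comb n f \<Omega> \<in> ideal_curve n y" "i < n"
  shows "f i = 0"
proof -
  interpret incongruent_orders n "\<lambda>i. pullback n y (\<Omega> i)"
    by (rule incongruent_orders_of_values_basis[OF assms(1,3)])
  have "comb f = 0"
    using assms(4) by (simp add: ideal_curve_def comb_def pullback_lin_comb[OF assms(1,2)])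
  then show ?thesis using assms(5) by (rule comb_eq_0_imp_zero)
qed

lemma lin_comb_values_basis_spans:
  assumes "0 < n" "y $ 0 = 0" "bij_betw (\<lambda>i. nu n y (\<Omega> i)) {..<n} (enat ` values_basis n y)"
  shows "\<exists>f. form_diff \<omega> (lin_comb n f \<Omega>) \<in> ideal_curve n y"
proof -
  interpret incongruent_orders n "\<lambda>i. pullback n y (\<Omega> i)"
    by (rule incongruent_orders_of_values_basis[OF assms(1,3)])
  have pullback_remainder: "pullback n y (form_diff \<omega> (lin_comb n f \<Omega>)) = pullback n y \<omega> - comb f" for f
    by (simp add: pullback_form_diff comb_def pullback_lin_comb[OF assms(1,2)])
  have "\<exists>f. pullback n y \<omega> = comb f"
  proof (rule comb_surj)
    fix g
    assume "pullback n y \<omega> \<noteq> comb g"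
    then show "\<exists>i<n. \<exists>k. subdegree (pullback n y \<omega> - comb g) = n * k + subdegree (pullback n y (\<Omega> i))"
      using pullback_order_in_basis_class[OF assms(1,3), of "form_diff \<omega> (lin_comb n g \<Omega>)"]
      by (simp add: pullback_remainder)
  qed
  then show ?thesis by (auto simp: ideal_curve_def pullback_remainder)
qed

theorem mainTheorem4:
  fixes n :: nat and y :: "complex fps" and \<Omega> :: "nat \<Rightarrow> form1"
  assumes "puiseux_param n y"
    and "bij_betw (\<lambda>i. nu n y (\<Omega> i)) {..<n} (enat ` values_basis n y)"
  shows "(\<forall>\<omega>. \<exists>f \<eta>. \<eta> \<in> ideal_curve n y \<and> \<omega> = form_add (lin_comb n f \<Omega>) \<eta>) \<and>
         (\<forall>f. lin_comb n f \<Omega> \<in> ideal_curve n y \<longrightarrow> (\<forall>i<n. f i = 0))"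
proof (intro conjI allI impI)
  have n_pos: "0 < n" and y0: "y $ 0 = 0"
    using assms(1) unfolding puiseux_param_def by (auto dest: order.strict_trans)
  note values_basis = n_pos y0 assms(2)
  show "\<exists>f \<eta>. \<eta> \<in> ideal_curve n y \<and> \<omega> = form_add (lin_comb n f \<Omega>) \<eta>" for \<omega>
    using lin_comb_values_basis_spans[OF values_basis, of \<omega>] form_add_form_diff by metis
  show "f i = 0" if "lin_comb n f \<Omega> \<in> ideal_curve n y" "i < n" for f i
    using lin_comb_values_basis_independent[OF values_basis that] .
qed

end
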